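(* Let $\mu$ be an unconditional log-concave measure on $\mathbb{R}^n$, and let $K \subset \mathbb{R}^n$ be a symmetric convex body. If $u$ is one of the vectors $e_1,\dots,e_n$ of the standard basis, then $$\mu(K)\,\mu(K^o) \leq \mu(S_u K)\,\mu((S_u K)^o).$$
   Context: A convex body is a compact convex set with non-empty interior; it is symmetric if $K=-K$. The polar body is $K^o := \{y : \langle x,y\rangle \leq 1 \ \forall x \in K\}$. A measure $\mu$ on $\mathbb{R}^n$ is log-concave if it has a density $f_\mu$ with $\log f_\mu$ concave (values in $\mathbb{R}\cup\{-\infty\}$), and unconditional if $f_\mu(\varepsilon_1x_1,\dots,\varepsilon_nx_n) = f_\mu(x)$ for all $x$ and all $\varepsilon \in \{\pm1\}^n$. For a unit vector $u$, the Steiner symmetral $S_uK$ is defined fiberwise: for every $y \in u^\perp$, letting $L_y := (L-y)\cap \mathbb{R}u$ denote the translated one-dimensional fiber of a set $L$ over $y$, we set $(S_uK)_y = \frac{K_y + (-K_y)}{2}$, i.e. $S_uK = \bigcup_{y\in u^\perp}\big(y + \tfrac{K_y + (-K_y)}{2}\big)$. *)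

theory Defs
  imports "HOL-Analysis.Analysis"
begin

definition convex_body :: "'a::euclidean_space set \<Rightarrow> bool" where
  "convex_body K \<longleftrightarrow> compact K \<and> convex K \<and> interior K \<noteq> {}"

definition symmetric_set :: "'a::real_vector set \<Rightarrow> bool" where
  "symmetric_set K \<longleftrightarrow> uminus ` K = K"

definition polar :: "'a::real_inner set \<Rightarrow> 'a set" where
  "polar K = {y. \<forall>x\<in>K. inner x y \<le> 1}"

text \<open>log f concave with values in R \<union> {-\<infinity>}, i.e. f \<ge> 0 and
  f((1-t)x+ty) \<ge> f(x)^(1-t) f(y)^t for 0<t<1.\<close>
definition log_concave_fun :: "('a::real_vector \<Rightarrow> real) \<Rightarrow> bool" where
  "log_concave_fun f \<longleftrightarrow> (\<forall>x. 0 \<le> f x) \<and>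
     (\<forall>x y t. 0 < t \<and> t < 1 \<longrightarrow>
        f x powr (1 - t) * f y powr t \<le> f ((1 - t) *\<^sub>R x + t *\<^sub>R y))"

definition log_concave_measure :: "'a::euclidean_space measure \<Rightarrow> bool" where
  "log_concave_measure \<mu> \<longleftrightarrow> (\<exists>f. f \<in> borel_measurable lebesgue \<and> log_concave_fun f \<and>
      \<mu> = density lebesgue (\<lambda>x. ennreal (f x)))"

definition unconditional_measure :: "(real^'n) measure \<Rightarrow> bool" where
  "unconditional_measure \<mu> \<longleftrightarrow> (\<exists>f. f \<in> borel_measurable lebesgue \<and> log_concave_fun f \<and>
      \<mu> = density lebesgue (\<lambda>x. ennreal (f x)) \<and>
      (\<forall>x (\<epsilon>::'n \<Rightarrow> real). (\<forall>j. \<epsilon> j \<in> {-1, 1}) \<longrightarrow> f (\<chi> j. \<epsilon> j * x $ j) = f x))"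

definition fiber :: "'a::real_inner set \<Rightarrow> 'a \<Rightarrow> 'a \<Rightarrow> real set" where
  "fiber L u y = {t. y + t *\<^sub>R u \<in> L}"

definition steiner_symmetral :: "'a::real_inner \<Rightarrow> 'a set \<Rightarrow> 'a set" where
  "steiner_symmetral u K =
     (\<Union>y\<in>{y. inner y u = 0}. (\<lambda>c. y + c *\<^sub>R u) `
        {(s + r) / 2 | s r. s \<in> fiber K u y \<and> r \<in> uminus ` fiber K u y})"

end

(*
  Write mu = f dx with f log-concave and invariant under sign changes of the coordinates, and let
  u = e_i.  On every line parallel to u the fiber of the convex body K is an interval, the fiber of
  S_u K is the centred interval of the same length, and f restricted to the line is even and
  log-concave, hence unimodal; so mu(K) <= mu(S_u K) fiber by fiber.

  For the polars, fix the height <x, u> = sigma.  If p and the reflection of q in the line R u both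
  lie in K^o and have height sigma, then (p + q)/2 lies in (S_u K)^o: a point of S_u K is the
  average of a point of K and the reflection through u^perp of another one, and K = -K.  Together with
  f(p) f(q) <= f((p + q)/2)^2 and the invariance of f and of Lebesgue measure under the reflection,
  the Prekopa-Leindler inequality on the hyperplane u^perp bounds the square of the mass of the
  slice of K^o by that of the slice of (S_u K)^o.  Prekopa-Leindler itself follows from the
  one-dimensional Brunn-Minkowski inequality by the layer-cake formula and induction on the
  dimension.
*)
theory Submission
  imports Defs
begin

lemma ennreal_mult_less_mult:
  fixes x y :: ennreal
  assumes "ennreal a < x" "ennreal b < y" "0 \<le> a" "0 \<le> b"
  shows "ennreal a * ennreal b < x * y"
proof (cases "x = \<infinity> \<or> y = \<infinity>")
  case True
  with assms have "x * y = \<infinity>"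
    by (auto simp: ennreal_mult_eq_top_iff)
  then show ?thesis
    by (simp add: ennreal_mult_less_top)
next
  case False
  then obtain x' y' where "x = ennreal x'" "y = ennreal y'" "0 \<le> x'" "0 \<le> y'"
    by (metis ennreal_cases infinity_ennreal_def)
  with assms show ?thesis
    by (simp add: ennreal_mult'[symmetric] ennreal_less_iff mult_strict_mono)
qed

lemma ennreal_mult_le_square_of_add_le:
  fixes a b z :: ennreal assumes "a + b \<le> 2 * z"
  shows "a * b \<le> z ^ 2"
proof (cases "a = \<infinity> \<or> b = \<infinity> \<or> z = \<infinity>")
  case True
  with assms show ?thesis
    by (auto simp: power2_eq_square top_unique ennreal_mult_eq_top_iff)
next
  case False
  then obtain a' b' z' where abz: "a = ennreal a'" "b = ennreal b'" "z = ennreal z'"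
    and nonneg: "0 \<le> a'" "0 \<le> b'" "0 \<le> z'"
    by (metis ennreal_cases infinity_ennreal_def)
  have "ennreal (a' + b') \<le> ennreal (2 * z')"
    using assms nonneg by (simp add: abz ennreal_mult flip: ennreal_plus)
  then have "a' + b' \<le> 2 * z'"
    using nonneg by (subst (asm) ennreal_le_iff) auto
  then have "(a' + b') ^ 2 \<le> (2 * z') ^ 2"
    using nonneg by (intro power_mono) auto
  moreover have "4 * (a' * b') \<le> (a' + b') ^ 2"
    using zero_le_power2[of "a' - b'"] by (simp add: power2_eq_square algebra_simps)
  ultimately have "a' * b' \<le> z' ^ 2"
    by (simp add: power2_eq_square)
  then show ?thesis
    using nonneg by (simp add: abz ennreal_mult[symmetric] ennreal_power ennreal_leI)
qed

lemma ennreal_le_of_power2_le: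
  fixes a b :: ennreal assumes "a\<^sup>2 \<le> b\<^sup>2"
  shows "a \<le> b"
proof (rule ccontr)
  assume "\<not> a \<le> b"
  then have "b < a"
    by simp
  then obtain b' where b': "b = ennreal b'" "0 \<le> b'"
    by (cases b) (auto simp: top_unique)
  show False
  proof (cases a)
    case (real a')
    with \<open>b < a\<close> b' have "b'\<^sup>2 < a'\<^sup>2"
      by (intro power_strict_mono) (auto simp: ennreal_less_iff)
    moreover have "ennreal (a'\<^sup>2) \<le> ennreal (b'\<^sup>2)"
      using assms real b' by (simp add: ennreal_power)
    ultimately show False
      using b' by (simp add: ennreal_le_iff)
  next
    case top
    with assms b' show False
      by (simp add: ennreal_power top_unique)
  qed
qed

lemma SUP_min_of_nat_ennreal: "(SUP n. min a (of_nat n)) = (a :: ennreal)"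
  by (simp add: inf_min[symmetric] inf_SUP[symmetric] ennreal_SUP_of_nat_eq_top)

section \<open>The Brunn-Minkowski inequality on the line\<close>

lemma emeasure_lborel_midpoint_image:
  fixes X :: "real set" assumes [measurable]: "X \<in> sets borel"
  shows "emeasure lborel X = 2 * emeasure lborel ((\<lambda>x. (x + b) / 2) ` X)"
proof -
  have image_eq: "(\<lambda>x. (x + b) / 2) ` X = (\<lambda>z. 2 * z - b) -` X"
  proof safe
    fix z assume "2 * z - b \<in> X"
    then show "z \<in> (\<lambda>x. (x + b) / 2) ` X" by (rule rev_image_eqI) simp
  qed (simp add: field_simps)
  have [measurable]: "(\<lambda>z. 2 * z - b) -` X \<in> sets borel"
    using measurable_sets_borel[of "\<lambda>z. 2 * z - b" borel X] by simp
  have "emeasure lborel X = 2 * (\<integral>\<^sup>+z. indicator X (2 * z - b) \<partial>lborel)"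
    using nn_integral_real_affine[of "indicator X" 2 "- b"] by simp
  also have "(\<lambda>z. indicator X (2 * z - b) :: ennreal) = indicator ((\<lambda>z. 2 * z - b) -` X)"
    by (auto simp: indicator_def)
  finally show ?thesis
    unfolding image_eq by simp
qed

lemma brunn_minkowski_midpoint_compact:
  fixes X Y Z :: "real set"
  assumes "compact X" "compact Y" "X \<noteq> {}" "Y \<noteq> {}" and [measurable]: "Z \<in> sets borel"
    and mid: "\<And>x y. x \<in> X \<Longrightarrow> y \<in> Y \<Longrightarrow> (x + y) / 2 \<in> Z"
  shows "emeasure lborel X + emeasure lborel Y \<le> 2 * emeasure lborel Z"
proof -
  obtain a where a: "a \<in> X" "\<And>x. x \<in> X \<Longrightarrow> x \<le> a"
    using compact_attains_sup[of X] assms by blast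
  obtain b where b: "b \<in> Y" "\<And>y. y \<in> Y \<Longrightarrow> b \<le> y"
    using compact_attains_inf[of Y] assms by blast
  define m where "m = (a + b) / 2"
  \<comment> \<open>(X + b)/2 and (a + Y)/2 are half-size copies of X and Y in Z, to the left and right of m.\<close>
  have [measurable]: "X \<in> sets borel" "Y \<in> sets borel"
    using assms by (auto intro: borel_compact)
  have "(\<lambda>x. (x + b) / 2) ` X \<subseteq> Z \<inter> {..m}"
    using mid[OF _ b(1)] a(2) by (auto simp: m_def)
  then have X_le: "emeasure lborel X \<le> 2 * emeasure lborel (Z \<inter> {..m})"
    by (subst emeasure_lborel_midpoint_image[of X b]) (auto intro!: mult_left_mono emeasure_mono)
  have Y_image: "(\<lambda>y. (y + a) / 2) ` Y \<subseteq> (Z \<inter> {m<..}) \<union> {m}"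
    using mid[OF a(1)] b(2) by (force simp: m_def add.commute)
  have "emeasure lborel ((Z \<inter> {m<..}) \<union> {m}) = emeasure lborel (Z \<inter> {m<..})"
    by (rule emeasure_Un_null_set) (auto intro: null_setsI)
  with emeasure_mono[OF Y_image, of lborel] have
    "emeasure lborel ((\<lambda>y. (y + a) / 2) ` Y) \<le> emeasure lborel (Z \<inter> {m<..})"
    by simp
  then have Y_le: "emeasure lborel Y \<le> 2 * emeasure lborel (Z \<inter> {m<..})"
    by (subst emeasure_lborel_midpoint_image[of Y a]) (auto intro!: mult_left_mono)
  have "emeasure lborel (Z \<inter> {..m}) + emeasure lborel (Z \<inter> {m<..}) = emeasure lborel Z"
    by (subst plus_emeasure) (auto intro!: arg_cong[where f="emeasure lborel"])
  with X_le Y_le show ?thesis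
    by (metis add_mono distrib_left)
qed

lemma emeasure_lborel_inner_regular:
  fixes X :: "'a::euclidean_space set" assumes X: "X \<in> sets borel"
  shows "emeasure lborel X = (SUP K\<in>{K. K \<subseteq> X \<and> compact K}. emeasure lborel K)"
proof (rule antisym)
  define C where "C n = cball (0::'a) (real n)" for n
  have [measurable]: "C n \<in> sets borel" for n
    by (simp add: C_def)
  have inner_C: "emeasure lborel (C n \<inter> X) \<le> (SUP K\<in>{K. K \<subseteq> X \<and> compact K}. emeasure lborel K)" for n
  proof -
    let ?M = "density lborel (indicator (C n))"
    have "emeasure ?M (space ?M) \<noteq> \<infinity>"
      using emeasure_bounded_finite[of "C n"] by (simp add: emeasure_restricted C_def)
    then have "emeasure ?M X = (SUP K\<in>{K. K \<subseteq> X \<and> compact K}. emeasure ?M K)"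
      using X by (intro inner_regular) auto
    also have "\<dots> \<le> (SUP K\<in>{K. K \<subseteq> X \<and> compact K}. emeasure lborel K)"
      by (intro SUP_subset_mono order_refl)
        (auto simp: emeasure_restricted borel_compact intro!: emeasure_mono)
    finally show ?thesis
      using X by (simp add: emeasure_restricted)
  qed
  have union: "(\<Union>n. C n) = UNIV"
  proof safe
    fix x :: 'a
    obtain n where "norm x \<le> real n"
      using real_arch_simple by blast
    then have "x \<in> C n"
      by (simp add: C_def)
    then show "x \<in> (\<Union>n. C n)"
      by blast
  qed simp
  have "incseq (\<lambda>n. C n \<inter> X)"
    unfolding incseq_def C_def by auto
  then have "(SUP n. emeasure lborel (C n \<inter> X)) = emeasure lborel (\<Union>n. C n \<inter> X)"
    using X by (intro SUP_emeasure_incseq) auto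
  also have "(\<Union>n. C n \<inter> X) = X"
    using union by blast
  finally have "(SUP n. emeasure lborel (C n \<inter> X)) = emeasure lborel X" .
  moreover have "(SUP n. emeasure lborel (C n \<inter> X))
      \<le> (SUP K\<in>{K. K \<subseteq> X \<and> compact K}. emeasure lborel K)"
    by (rule SUP_least) (rule inner_C)
  ultimately show "emeasure lborel X \<le> (SUP K\<in>{K. K \<subseteq> X \<and> compact K}. emeasure lborel K)"
    by simp
next
  show "(SUP K\<in>{K. K \<subseteq> X \<and> compact K}. emeasure lborel K) \<le> emeasure lborel X"
    using X by (intro SUP_least emeasure_mono) auto
qed

lemma brunn_minkowski_midpoint:
  fixes X Y Z :: "real set"
  assumes X: "X \<in> sets borel" and Y: "Y \<in> sets borel" and Z: "Z \<in> sets borel"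
    and "X \<noteq> {}" "Y \<noteq> {}"
    and mid: "\<And>x y. x \<in> X \<Longrightarrow> y \<in> Y \<Longrightarrow> (x + y) / 2 \<in> Z"
  shows "emeasure lborel X + emeasure lborel Y \<le> 2 * emeasure lborel Z"
proof -
  obtain x0 y0 where x0: "x0 \<in> X" and y0: "y0 \<in> Y"
    using assms by blast
  let ?C = "\<lambda>S. {K. K \<subseteq> S \<and> compact K}"
  have compact_case: "emeasure lborel K + emeasure lborel L \<le> 2 * emeasure lborel Z"
    if "K \<in> ?C X" "L \<in> ?C Y" for K L
  proof -
    \<comment> \<open>The compact case needs nonempty sets, hence the extra points.\<close>
    have "emeasure lborel K + emeasure lborel L
        \<le> emeasure lborel (insert x0 K) + emeasure lborel (insert y0 L)"
      using that by (intro add_mono emeasure_mono) (auto intro: borel_compact)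
    also have "\<dots> \<le> 2 * emeasure lborel Z"
      using that x0 y0 by (intro brunn_minkowski_midpoint_compact Z) (auto intro: mid)
    finally show ?thesis .
  qed
  have "?C X \<noteq> {}" "?C Y \<noteq> {}"
    by auto
  then have "emeasure lborel X + emeasure lborel Y
      = (SUP L\<in>?C Y. SUP K\<in>?C X. emeasure lborel K + emeasure lborel L)"
    unfolding emeasure_lborel_inner_regular[OF X] emeasure_lborel_inner_regular[OF Y]
    by (simp add: ennreal_SUP_add_left[symmetric] ennreal_SUP_add_right)
  also have "\<dots> \<le> 2 * emeasure lborel Z"
    by (intro SUP_least compact_case)
  finally show ?thesis .
qed

lemma emeasure_lborel_atLeast: "emeasure lborel {a::real..} = \<infinity>"
proof -
  have "of_nat n \<le> emeasure lborel {a::real..}" for n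
    using emeasure_mono[of "{a..a + real n}" "{a..}" lborel] by (simp add: ennreal_of_nat_eq_real_of_nat)
  then have "(SUP n. of_nat n :: ennreal) \<le> emeasure lborel {a::real..}"
    by (rule SUP_least)
  then show ?thesis
    by (simp add: ennreal_SUP_of_nat_eq_top top_unique)
qed

lemma nn_integral_layer_cake:
  fixes f :: "real \<Rightarrow> ennreal" assumes [measurable]: "f \<in> borel_measurable borel"
  shows "(\<integral>\<^sup>+x. f x \<partial>lborel)
    = (\<integral>\<^sup>+t. indicator {0..} t * emeasure lborel {x. ennreal t < f x} \<partial>lborel)"
proof -
  have f_eq: "f x = (\<integral>\<^sup>+t. indicator {0..} t * indicator {t. ennreal t < f x} t \<partial>lborel)" for x
  proof (cases "f x")
    case (real r)
    then have "(\<lambda>t. indicator {0..} t * indicator {t. ennreal t < f x} t :: ennreal) = indicator {0..<r}"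
      by (auto simp: indicator_def fun_eq_iff ennreal_less_iff)
    then show ?thesis
      using real by simp
  next
    case top
    then show ?thesis
      by (simp add: emeasure_lborel_atLeast)
  qed
  have "(\<integral>\<^sup>+x. f x \<partial>lborel)
      = (\<integral>\<^sup>+x. \<integral>\<^sup>+t. indicator {0..} t * indicator {t. ennreal t < f x} t \<partial>lborel \<partial>lborel)"
    by (subst f_eq) rule
  also have "\<dots> = (\<integral>\<^sup>+t. \<integral>\<^sup>+x. indicator {0..} t * indicator {x. ennreal t < f x} x \<partial>lborel \<partial>lborel)"
    by (subst lborel_pair.Fubini') (auto simp: indicator_def)
  also have "\<dots> = (\<integral>\<^sup>+t. indicator {0..} t * emeasure lborel {x. ennreal t < f x} \<partial>lborel)"
    by (simp add: nn_integral_cmult)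
  finally show ?thesis .
qed

lemma borel_measurable_emeasure_superlevel:
  fixes f :: "real \<Rightarrow> ennreal" assumes [measurable]: "f \<in> borel_measurable borel"
  shows "(\<lambda>t. emeasure lborel {x. ennreal t < f x}) \<in> borel_measurable borel"
proof -
  have "{p \<in> space (lborel \<Otimes>\<^sub>M lborel). ennreal (fst p) < f (snd p)} \<in> sets (lborel \<Otimes>\<^sub>M lborel)"
    by measurable
  then have "{p :: real \<times> real. ennreal (fst p) < f (snd p)} \<in> sets (lborel \<Otimes>\<^sub>M lborel)"
    by (simp add: space_pair_measure)
  from lborel.measurable_emeasure_Pair[OF this] show ?thesis
    by (simp add: vimage_def)
qed

lemma nn_integral_layer_cake_scaled:
  fixes f :: "real \<Rightarrow> ennreal" assumes [measurable]: "f \<in> borel_measurable borel" and "0 < c"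
  shows "(\<integral>\<^sup>+x. f x \<partial>lborel)
    = c * (\<integral>\<^sup>+s. indicator {0..} s * emeasure lborel {x. ennreal (c * s) < f x} \<partial>lborel)"
proof -
  note [measurable] = borel_measurable_emeasure_superlevel[of f]
  have "(\<integral>\<^sup>+x. f x \<partial>lborel)
      = (\<integral>\<^sup>+t. indicator {0..} t * emeasure lborel {x. ennreal t < f x} \<partial>lborel)"
    by (rule nn_integral_layer_cake) measurable
  also have "\<dots> = ennreal \<bar>c\<bar> * (\<integral>\<^sup>+s. indicator {0..} (0 + c * s)
      * emeasure lborel {x. ennreal (0 + c * s) < f x} \<partial>lborel)"
    using \<open>0 < c\<close> by (intro nn_integral_real_affine) auto
  also have "\<dots> = c * (\<integral>\<^sup>+s. indicator {0..} s * emeasure lborel {x. ennreal (c * s) < f x} \<partial>lborel)"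
    using \<open>0 < c\<close> by (auto intro!: nn_integral_cong simp: indicator_def zero_le_mult_iff)
  finally show ?thesis .
qed

lemma nn_integral_layer_cake_bounded:
  fixes f :: "real \<Rightarrow> ennreal"
  assumes "f \<in> borel_measurable borel" and "0 < c" and le: "\<And>x. f x \<le> c"
  shows "(\<integral>\<^sup>+x. f x \<partial>lborel)
    = c * (\<integral>\<^sup>+s. indicator {0..<1} s * emeasure lborel {x. ennreal (c * s) < f x} \<partial>lborel)"
proof -
  have "{x. ennreal (c * s) < f x} = {}" if "1 \<le> s" for s
  proof -
    have "ennreal c \<le> ennreal (c * s)"
      using \<open>0 < c\<close> that by (intro ennreal_leI) simp
    then show ?thesis
      using order_trans[OF le] by (auto simp: not_less)
  qed
  then have "(\<lambda>s. indicator {0..} s * emeasure lborel {x. ennreal (c * s) < f x})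
      = (\<lambda>s. indicator {0..<1} s * emeasure lborel {x. ennreal (c * s) < f x})"
    by (force simp: fun_eq_iff indicator_def)
  with nn_integral_layer_cake_scaled[OF assms(1,2)] show ?thesis
    by simp
qed

section \<open>The Prekopa-Leindler inequality\<close>

lemma emeasure_superlevel_midpoint:
  fixes f g h :: "real \<Rightarrow> ennreal"
  assumes [measurable]: "f \<in> borel_measurable borel" "g \<in> borel_measurable borel"
    "h \<in> borel_measurable borel"
    and mid: "\<And>x y. f x * g y \<le> h ((x + y) / 2) ^ 2"
    and "0 \<le> \<alpha>" "0 \<le> \<beta>" "0 \<le> \<gamma>" and levels: "\<alpha> * \<beta> = \<gamma>\<^sup>2"
    and "{x. ennreal \<alpha> < f x} \<noteq> {}" "{y. ennreal \<beta> < g y} \<noteq> {}"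
  shows "emeasure lborel {x. ennreal \<alpha> < f x} + emeasure lborel {y. ennreal \<beta> < g y}
    \<le> 2 * emeasure lborel {z. ennreal \<gamma> < h z}"
proof (rule brunn_minkowski_midpoint)
  fix x y assume x: "x \<in> {x. ennreal \<alpha> < f x}" and y: "y \<in> {y. ennreal \<beta> < g y}"
  show "(x + y) / 2 \<in> {z. ennreal \<gamma> < h z}"
  proof (rule ccontr)
    assume "(x + y) / 2 \<notin> {z. ennreal \<gamma> < h z}"
    then have "h ((x + y) / 2) ^ 2 \<le> ennreal \<gamma> ^ 2"
      by (intro power_mono) auto
    also have "\<dots> = ennreal \<alpha> * ennreal \<beta>"
      using assms by (simp add: ennreal_power ennreal_mult flip: levels)
    also have "\<dots> < f x * g y"
      using x y assms by (intro ennreal_mult_less_mult) auto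
    also have "\<dots> \<le> h ((x + y) / 2) ^ 2"
      by (rule mid)
    finally show False
      by simp
  qed
qed (use assms in auto)

lemma prekopa_leindler_midpoint_normalized:
  fixes f g h :: "real \<Rightarrow> ennreal"
  assumes [measurable]: "f \<in> borel_measurable borel" "g \<in> borel_measurable borel"
    "h \<in> borel_measurable borel"
    and mid: "\<And>x y. f x * g y \<le> h ((x + y) / 2) ^ 2"
    and A: "0 < A" "(SUP x. f x) = ennreal A" and B: "0 < B" "(SUP x. g x) = ennreal B"
  shows "(\<integral>\<^sup>+x. f x \<partial>lborel) * (\<integral>\<^sup>+x. g x \<partial>lborel) \<le> (\<integral>\<^sup>+x. h x \<partial>lborel) ^ 2"
proof -
  define C where "C = sqrt (A * B)"
  have C: "0 < C" "A * B = C\<^sup>2"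
    using A B by (simp_all add: C_def)
  define E where "E c k s = emeasure lborel {x. ennreal (c * s) < k x}"
    for c :: real and k :: "real \<Rightarrow> ennreal" and s
  have [measurable]: "E c k \<in> borel_measurable borel" if "k \<in> borel_measurable borel" for c k
    using measurable_compose[OF _ borel_measurable_emeasure_superlevel[OF that], of "\<lambda>s. c * s" borel]
    by (simp add: E_def[abs_def])
  define I where "I k = (\<integral>\<^sup>+s. indicator {0..<1} s * k s \<partial>lborel)" for k :: "real \<Rightarrow> ennreal"
  have f_eq: "(\<integral>\<^sup>+x. f x \<partial>lborel) = A * I (E A f)"
    unfolding I_def E_def using A by (intro nn_integral_layer_cake_bounded) (auto simp flip: A(2) intro: SUP_upper)
  have g_eq: "(\<integral>\<^sup>+x. g x \<partial>lborel) = B * I (E B g)"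
    unfolding I_def E_def using B by (intro nn_integral_layer_cake_bounded) (auto simp flip: B(2) intro: SUP_upper)
  have "C * I (E C h) \<le> C * (\<integral>\<^sup>+s. indicator {0..} s * E C h s \<partial>lborel)"
    unfolding I_def by (intro mult_left_mono nn_integral_mono) (auto simp: indicator_def)
  also have "\<dots> = (\<integral>\<^sup>+x. h x \<partial>lborel)"
    unfolding E_def using C by (intro nn_integral_layer_cake_scaled[symmetric]) auto
  finally have h_ge: "C * I (E C h) \<le> (\<integral>\<^sup>+x. h x \<partial>lborel)" .
  \<comment> \<open>Measured in units of the suprema A and B, every superlevel set of f and g below height 1
    is nonempty, so Brunn-Minkowski applies level by level.\<close>
  have levels: "E A f s + E B g s \<le> 2 * E C h s" if "0 \<le> s" "s < 1" for s
  proof -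
    have "ennreal (A * s) < (SUP x. f x)" "ennreal (B * s) < (SUP x. g x)"
      using A B that by (simp_all add: ennreal_less_iff)
    then have "{x. ennreal (A * s) < f x} \<noteq> {}" "{y. ennreal (B * s) < g y} \<noteq> {}"
      by (auto simp: less_SUP_iff)
    moreover have "(A * s) * (B * s) = (C * s)\<^sup>2"
      using C by (simp add: power2_eq_square algebra_simps)
    ultimately show ?thesis
      unfolding E_def using A B C that
      by (intro emeasure_superlevel_midpoint mid) auto
  qed
  have "I (E A f) + I (E B g) = (\<integral>\<^sup>+s. indicator {0..<1} s * (E A f s + E B g s) \<partial>lborel)"
    unfolding I_def by (subst nn_integral_add[symmetric]) (auto simp: distrib_left)
  also have "\<dots> \<le> (\<integral>\<^sup>+s. 2 * (indicator {0..<1} s * E C h s) \<partial>lborel)"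
    using levels by (intro nn_integral_mono) (auto simp: indicator_def)
  also have "\<dots> = 2 * I (E C h)"
    unfolding I_def by (rule nn_integral_cmult) auto
  finally have "I (E A f) * I (E B g) \<le> I (E C h) ^ 2"
    by (rule ennreal_mult_le_square_of_add_le)
  then have "(\<integral>\<^sup>+x. f x \<partial>lborel) * (\<integral>\<^sup>+x. g x \<partial>lborel) \<le> (C * I (E C h)) ^ 2"
    unfolding f_eq g_eq using A B C
    by (simp add: ennreal_mult' power_mult_distrib mult_left_mono ac_simps ennreal_power flip: C(2))
  also have "\<dots> \<le> (\<integral>\<^sup>+x. h x \<partial>lborel) ^ 2"
    using h_ge by (rule power_mono) simp
  finally show ?thesis .
qed

lemma prekopa_leindler_midpoint_bounded:
  fixes f g h :: "real \<Rightarrow> ennreal"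
  assumes [measurable]: "f \<in> borel_measurable borel" "g \<in> borel_measurable borel"
    "h \<in> borel_measurable borel"
    and f_le: "\<And>x. f x \<le> ennreal M\<^sub>f" and g_le: "\<And>x. g x \<le> ennreal M\<^sub>g"
    and mid: "\<And>x y. f x * g y \<le> h ((x + y) / 2) ^ 2"
  shows "(\<integral>\<^sup>+x. f x \<partial>lborel) * (\<integral>\<^sup>+x. g x \<partial>lborel) \<le> (\<integral>\<^sup>+x. h x \<partial>lborel) ^ 2"
proof (cases "(SUP x. f x) = 0 \<or> (SUP x. g x) = 0")
  case True
  then have "(\<forall>x. f x = 0) \<or> (\<forall>x. g x = 0)"
    by (metis SUP_upper UNIV_I le_zero_eq)
  then show ?thesis
    by auto
next
  case False
  have positive_sup: "\<exists>A>0. (SUP x. k x) = ennreal A"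
    if "(SUP x. k x) \<noteq> 0" "\<And>x. k x \<le> ennreal M" for k :: "real \<Rightarrow> ennreal" and M
  proof -
    have "(SUP x. k x) \<le> ennreal M"
      by (rule SUP_least) (rule that(2))
    then have "(SUP x. k x) \<noteq> \<infinity>"
      by (metis ennreal_neq_top top_unique infinity_ennreal_def)
    with that(1) show ?thesis
      by (cases "SUP x. k x") (auto intro!: exI[where P="\<lambda>A. 0 < A \<and> _ A"])
  qed
  obtain A where A: "0 < A" "(SUP x. f x) = ennreal A"
    using positive_sup[of f, OF _ f_le] False by blast
  moreover obtain B where B: "0 < B" "(SUP x. g x) = ennreal B"
    using positive_sup[of g, OF _ g_le] False by blast
  ultimately show ?thesis
    using prekopa_leindler_midpoint_normalized[OF assms(1-3) mid] by blast
qed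

lemma prekopa_leindler_midpoint:
  fixes f g h :: "real \<Rightarrow> ennreal"
  assumes [measurable]: "f \<in> borel_measurable borel" "g \<in> borel_measurable borel"
    "h \<in> borel_measurable borel"
    and mid: "\<And>x y. f x * g y \<le> h ((x + y) / 2) ^ 2"
  shows "(\<integral>\<^sup>+x. f x \<partial>lborel) * (\<integral>\<^sup>+x. g x \<partial>lborel) \<le> (\<integral>\<^sup>+x. h x \<partial>lborel) ^ 2"
proof -
  have truncate: "(\<integral>\<^sup>+x. k x \<partial>lborel) = (SUP n. \<integral>\<^sup>+x. min (k x) (of_nat n) \<partial>lborel)"
    if [measurable]: "k \<in> borel_measurable borel" for k :: "real \<Rightarrow> ennreal"
    by (subst nn_integral_monotone_convergence_SUP[symmetric])
      (auto simp: SUP_min_of_nat_ennreal incseq_def le_fun_def min.coboundedI2)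
  have "(\<integral>\<^sup>+x. min (f x) (of_nat n) \<partial>lborel) * (\<integral>\<^sup>+x. min (g x) (of_nat m) \<partial>lborel)
      \<le> (\<integral>\<^sup>+x. h x \<partial>lborel) ^ 2" for n m
  proof (rule prekopa_leindler_midpoint_bounded)
    show "min (f x) (of_nat n) \<le> ennreal (real n)" "min (g x) (of_nat m) \<le> ennreal (real m)" for x
      by (simp_all add: ennreal_of_nat_eq_real_of_nat)
    show "min (f x) (of_nat n) * min (g y) (of_nat m) \<le> h ((x + y) / 2) ^ 2" for x y
      using mid[of x y] by (meson min.cobounded1 mult_mono order_trans zero_le)
  qed auto
  then show ?thesis
    unfolding truncate[OF assms(1)] truncate[OF assms(2)] SUP_mult_right_ennreal SUP_mult_left_ennreal
    by (auto intro!: SUP_least)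
qed

lemma borel_measurable_nn_integral_PiM_update:
  fixes K :: "('i \<Rightarrow> real) \<Rightarrow> ennreal"
  assumes "finite I" "i \<notin> I" and [measurable]: "K \<in> borel_measurable (\<Pi>\<^sub>M j\<in>insert i I. lborel)"
  shows "(\<lambda>t. \<integral>\<^sup>+x. K (x(i := t)) \<partial>(\<Pi>\<^sub>M j\<in>I. lborel)) \<in> borel_measurable borel"
proof -
  interpret product_sigma_finite "(\<lambda>_. lborel) :: 'i \<Rightarrow> real measure"
    by standard
  have "(\<lambda>(t, x). K (x(i := t))) \<in> borel_measurable (lborel \<Otimes>\<^sub>M (\<Pi>\<^sub>M j\<in>I. lborel))"
    using assms(2) by measurable
  from sigma_finite_measure.borel_measurable_nn_integral[OF sigma_finite[OF \<open>finite I\<close>] this]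
  show ?thesis
    by simp
qed

lemma prekopa_leindler_midpoint_PiM:
  fixes F G H :: "('i \<Rightarrow> real) \<Rightarrow> ennreal"
  assumes "finite I"
    and "F \<in> borel_measurable (\<Pi>\<^sub>M i\<in>I. lborel)" "G \<in> borel_measurable (\<Pi>\<^sub>M i\<in>I. lborel)"
      "H \<in> borel_measurable (\<Pi>\<^sub>M i\<in>I. lborel)"
    and "\<And>x y. x \<in> space (\<Pi>\<^sub>M i\<in>I. lborel) \<Longrightarrow> y \<in> space (\<Pi>\<^sub>M i\<in>I. lborel) \<Longrightarrow>
      F x * G y \<le> H (\<lambda>i\<in>I. (x i + y i) / 2) ^ 2"
  shows "(\<integral>\<^sup>+x. F x \<partial>(\<Pi>\<^sub>M i\<in>I. lborel)) * (\<integral>\<^sup>+x. G x \<partial>(\<Pi>\<^sub>M i\<in>I. lborel))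
    \<le> (\<integral>\<^sup>+x. H x \<partial>(\<Pi>\<^sub>M i\<in>I. lborel)) ^ 2"
  using assms
proof (induction I arbitrary: F G H rule: finite_induct)
  case empty
  let ?u = "\<lambda>_. undefined :: real"
  have "?u \<in> space (\<Pi>\<^sub>M i\<in>{}. lborel)"
    by (simp add: space_PiM)
  from empty.prems(4)[OF this this] show ?case
    by (simp add: PiM_empty nn_integral_count_space_finite restrict_def)
next
  case (insert i I)
  interpret product_sigma_finite "(\<lambda>_. lborel) :: 'i \<Rightarrow> real measure"
    by standard
  note [measurable] = insert.prems(1-3)
  have slices: "(\<integral>\<^sup>+x. K x \<partial>(\<Pi>\<^sub>M j\<in>insert i I. lborel))
      = (\<integral>\<^sup>+t. \<integral>\<^sup>+x. K (x(i := t)) \<partial>(\<Pi>\<^sub>M j\<in>I. lborel) \<partial>lborel)"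
    if "K \<in> borel_measurable (\<Pi>\<^sub>M j\<in>insert i I. lborel)" for K :: "('i \<Rightarrow> real) \<Rightarrow> ennreal"
    using insert.hyps that by (intro product_nn_integral_insert_rev) auto
  have slice_measurable: "(\<lambda>x. K (x(i := t))) \<in> borel_measurable (\<Pi>\<^sub>M j\<in>I. lborel)"
    if [measurable]: "K \<in> borel_measurable (\<Pi>\<^sub>M j\<in>insert i I. lborel)"
    for K :: "('i \<Rightarrow> real) \<Rightarrow> ennreal" and t
    using insert.hyps by measurable
  show ?case
    unfolding slices[OF insert.prems(1)] slices[OF insert.prems(2)] slices[OF insert.prems(3)]
  proof (rule prekopa_leindler_midpoint;
      (intro borel_measurable_nn_integral_PiM_update insert.hyps insert.prems)?)
    fix s r :: real
    show "(\<integral>\<^sup>+x. F (x(i := s)) \<partial>(\<Pi>\<^sub>M j\<in>I. lborel)) * (\<integral>\<^sup>+x. G (x(i := r)) \<partial>(\<Pi>\<^sub>M j\<in>I. lborel))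
      \<le> (\<integral>\<^sup>+x. H (x(i := (s + r) / 2)) \<partial>(\<Pi>\<^sub>M j\<in>I. lborel)) ^ 2"
    proof (rule insert.IH; (intro slice_measurable insert.prems)?)
      fix x y :: "'i \<Rightarrow> real" assume "x \<in> space (\<Pi>\<^sub>M j\<in>I. lborel)" "y \<in> space (\<Pi>\<^sub>M j\<in>I. lborel)"
      then have "x(i := s) \<in> space (\<Pi>\<^sub>M j\<in>insert i I. lborel)" "y(i := r) \<in> space (\<Pi>\<^sub>M j\<in>insert i I. lborel)"
        by (auto simp: space_PiM PiE_def extensional_def)
      moreover have "(\<lambda>j\<in>insert i I. ((x(i := s)) j + (y(i := r)) j) / 2) = (\<lambda>j\<in>I. (x j + y j) / 2)(i := (s + r) / 2)"
        using insert.hyps by (auto simp: fun_eq_iff)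
      ultimately show "F (x(i := s)) * G (y(i := r)) \<le> H ((\<lambda>j\<in>I. (x j + y j) / 2)(i := (s + r) / 2)) ^ 2"
        using insert.prems(4) by metis
    qed
  qed
qed

lemma distr_PiM_lborel_reflect:
  fixes I :: "'i set" assumes "finite I"
  shows "distr (\<Pi>\<^sub>M i\<in>I. lborel) (\<Pi>\<^sub>M i\<in>I. lborel) (\<lambda>x. \<lambda>i\<in>I. - x i) = (\<Pi>\<^sub>M i\<in>I. (lborel :: real measure))"
proof -
  interpret product_sigma_finite "(\<lambda>_. lborel) :: 'i \<Rightarrow> real measure"
    by standard
  show ?thesis
  proof (rule PiM_eqI[OF \<open>finite I\<close>])
    fix A :: "'i \<Rightarrow> real set" assume A: "\<And>i. i \<in> I \<Longrightarrow> A i \<in> sets lborel"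
    have reflected: "uminus -` A i \<in> sets lborel" if "i \<in> I" for i
      using measurable_sets_borel[of uminus borel "A i"] A[OF that] by simp
    have "Pi\<^sub>E I A \<in> sets (\<Pi>\<^sub>M i\<in>I. lborel)"
      using A by (intro sets_PiM_I_finite \<open>finite I\<close>) auto
    then have "emeasure (distr (\<Pi>\<^sub>M i\<in>I. lborel) (\<Pi>\<^sub>M i\<in>I. lborel) (\<lambda>x. \<lambda>i\<in>I. - x i)) (Pi\<^sub>E I A)
        = emeasure (\<Pi>\<^sub>M i\<in>I. lborel) ((\<lambda>x. \<lambda>i\<in>I. - x i) -` Pi\<^sub>E I A \<inter> space (\<Pi>\<^sub>M i\<in>I. lborel))"
      by (intro emeasure_distr) auto
    also have "(\<lambda>x. \<lambda>i\<in>I. - x i) -` Pi\<^sub>E I A \<inter> space (\<Pi>\<^sub>M i\<in>I. lborel) = Pi\<^sub>E I (\<lambda>i. uminus -` A i)"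
      by (auto simp: space_PiM PiE_def extensional_def Pi_def)
    also have "emeasure (\<Pi>\<^sub>M i\<in>I. lborel) (Pi\<^sub>E I (\<lambda>i. uminus -` A i)) = (\<Prod>i\<in>I. emeasure lborel (uminus -` A i))"
      using reflected by (intro emeasure_PiM \<open>finite I\<close>) auto
    also have "\<dots> = (\<Prod>i\<in>I. emeasure lborel (A i))"
      using A by (intro prod.cong refl) (subst (2) lborel_distr_uminus[symmetric], simp add: emeasure_distr)
    finally show "emeasure (distr (\<Pi>\<^sub>M i\<in>I. lborel) (\<Pi>\<^sub>M i\<in>I. lborel) (\<lambda>x. \<lambda>i\<in>I. - x i)) (Pi\<^sub>E I A)
        = (\<Prod>i\<in>I. emeasure lborel (A i))" .
  qed simp
qed

lemma nn_integral_PiM_lborel_reflect: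
  fixes F :: "('i \<Rightarrow> real) \<Rightarrow> ennreal"
  assumes "finite I" and [measurable]: "F \<in> borel_measurable (\<Pi>\<^sub>M i\<in>I. lborel)"
  shows "(\<integral>\<^sup>+x. F (\<lambda>i\<in>I. - x i) \<partial>(\<Pi>\<^sub>M i\<in>I. lborel)) = (\<integral>\<^sup>+x. F x \<partial>(\<Pi>\<^sub>M i\<in>I. lborel))"
  by (subst (2) distr_PiM_lborel_reflect[OF \<open>finite I\<close>, symmetric]) (simp add: nn_integral_distr)

lemma nn_integral_indicator_le_by_threshold:
  fixes \<phi> :: "'a \<Rightarrow> ennreal"
  assumes [measurable]: "\<phi> \<in> borel_measurable M" "I \<in> sets M" "J \<in> sets M"
    and same_measure: "emeasure M J = emeasure M I" and finite: "emeasure M I \<noteq> \<infinity>"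
    and below: "\<And>t. t \<in> J - I \<Longrightarrow> \<phi> t \<le> c" and above: "\<And>t. t \<in> I - J \<Longrightarrow> c \<le> \<phi> t"
  shows "(\<integral>\<^sup>+t\<in>J. \<phi> t \<partial>M) \<le> (\<integral>\<^sup>+t\<in>I. \<phi> t \<partial>M)"
proof -
  have "emeasure M (I \<inter> J) + emeasure M (J - I) = emeasure M J"
    by (subst plus_emeasure) (auto intro!: arg_cong[where f="emeasure M"])
  moreover have "emeasure M (I \<inter> J) + emeasure M (I - J) = emeasure M I"
    by (subst plus_emeasure) (auto intro!: arg_cong[where f="emeasure M"])
  moreover have "emeasure M (I \<inter> J) \<noteq> \<infinity>"
    using finite emeasure_mono[of "I \<inter> J" I M] by (auto simp: top_unique)
  ultimately have diffs: "emeasure M (J - I) = emeasure M (I - J)"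
    using same_measure by (metis ennreal_add_left_cancel infinity_ennreal_def)
  have "(\<integral>\<^sup>+t\<in>J - I. \<phi> t \<partial>M) \<le> (\<integral>\<^sup>+t\<in>J - I. c \<partial>M)"
    using below by (intro nn_integral_mono) (simp split: split_indicator)
  also have "\<dots> = (\<integral>\<^sup>+t\<in>I - J. c \<partial>M)"
    using diffs by (simp add: nn_integral_cmult_indicator)
  also have "\<dots> \<le> (\<integral>\<^sup>+t\<in>I - J. \<phi> t \<partial>M)"
    using above by (intro nn_integral_mono) (simp split: split_indicator)
  finally have "(\<integral>\<^sup>+t\<in>J - I. \<phi> t \<partial>M) \<le> (\<integral>\<^sup>+t\<in>I - J. \<phi> t \<partial>M)" .
  then have "(\<integral>\<^sup>+t\<in>I \<inter> J. \<phi> t \<partial>M) + (\<integral>\<^sup>+t\<in>J - I. \<phi> t \<partial>M)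
      \<le> (\<integral>\<^sup>+t\<in>I \<inter> J. \<phi> t \<partial>M) + (\<integral>\<^sup>+t\<in>I - J. \<phi> t \<partial>M)"
    by (rule add_left_mono)
  then have "(\<integral>\<^sup>+t\<in>(I \<inter> J) \<union> (J - I). \<phi> t \<partial>M) \<le> (\<integral>\<^sup>+t\<in>(I \<inter> J) \<union> (I - J). \<phi> t \<partial>M)"
    by (subst (1 2) nn_integral_disjoint_pair) auto
  moreover have "(I \<inter> J) \<union> (J - I) = J" "(I \<inter> J) \<union> (I - J) = I"
    by auto
  ultimately show ?thesis
    by simp
qed

lemma nn_integral_interval_le_centered:
  fixes \<phi> :: "real \<Rightarrow> ennreal"
  assumes "\<phi> \<in> borel_measurable borel" and "a \<le> b"
    and unimodal: "\<And>s t. \<bar>s\<bar> \<le> \<bar>t\<bar> \<Longrightarrow> \<phi> t \<le> \<phi> s"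
  shows "(\<integral>\<^sup>+t\<in>{a..b}. \<phi> t \<partial>lborel) \<le> (\<integral>\<^sup>+t\<in>{-((b - a) / 2)..(b - a) / 2}. \<phi> t \<partial>lborel)"
proof (rule nn_integral_indicator_le_by_threshold[where c="\<phi> ((b - a) / 2)"])
  show "emeasure lborel {a..b} = emeasure lborel {-((b - a) / 2)..(b - a) / 2}"
    using \<open>a \<le> b\<close> by (simp add: field_simps)
next
  fix t assume "t \<in> {a..b} - {-((b - a) / 2)..(b - a) / 2}"
  then show "\<phi> t \<le> \<phi> ((b - a) / 2)"
    by (intro unimodal) (auto simp: abs_if field_simps)
next
  fix t assume "t \<in> {-((b - a) / 2)..(b - a) / 2} - {a..b}"
  then show "\<phi> ((b - a) / 2) \<le> \<phi> t"
    using \<open>a \<le> b\<close> by (intro unimodal) (auto simp: abs_if field_simps)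
qed (use assms in \<open>auto simp: emeasure_lborel_Icc_eq\<close>)

section \<open>Log-concave functions\<close>

lemma log_concave_funD:
  assumes "log_concave_fun f" "0 < t" "t < 1"
  shows "f x powr (1 - t) * f y powr t \<le> f ((1 - t) *\<^sub>R x + t *\<^sub>R y)"
  using assms by (auto simp: log_concave_fun_def)

lemma log_concave_fun_nonneg: "log_concave_fun f \<Longrightarrow> 0 \<le> f x"
  by (simp add: log_concave_fun_def)

lemma log_concave_fun_midpoint:
  assumes "log_concave_fun f"
  shows "f x * f y \<le> f ((1 / 2) *\<^sub>R (x + y)) ^ 2"
proof -
  have "f x powr (1 / 2) * f y powr (1 / 2) \<le> f ((1 / 2) *\<^sub>R (x + y))"
    using log_concave_funD[OF assms, of "1 / 2" x y] by (simp add: scaleR_add_right)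
  then have "(f x powr (1 / 2) * f y powr (1 / 2)) ^ 2 \<le> f ((1 / 2) *\<^sub>R (x + y)) ^ 2"
    by (intro power_mono) auto
  also have "(f x powr (1 / 2) * f y powr (1 / 2)) ^ 2 = f x * f y"
    using log_concave_fun_nonneg[OF assms]
    by (simp add: power_mult_distrib powr_half_sqrt)
  finally show ?thesis .
qed

lemma log_concave_fun_compose_affine:
  assumes "log_concave_fun f"
  shows "log_concave_fun (\<lambda>t. f (y + t *\<^sub>R u))"
  unfolding log_concave_fun_def
proof (intro conjI allI impI)
  fix s t l :: real assume "0 < l \<and> l < 1"
  then show "f (y + s *\<^sub>R u) powr (1 - l) * f (y + t *\<^sub>R u) powr l \<le> f (y + ((1 - l) *\<^sub>R s + l *\<^sub>R t) *\<^sub>R u)"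
    using log_concave_funD[OF assms, of l "y + s *\<^sub>R u" "y + t *\<^sub>R u"]
    by (simp add: algebra_simps)
qed (use assms in \<open>simp add: log_concave_fun_nonneg\<close>)

lemma log_concave_fun_even_unimodal:
  fixes \<phi> :: "real \<Rightarrow> real"
  assumes "log_concave_fun \<phi>" and even: "\<And>t. \<phi> (- t) = \<phi> t" and "\<bar>s\<bar> \<le> \<bar>t\<bar>"
  shows "\<phi> t \<le> \<phi> s"
proof (cases "s = t \<or> s = - t")
  case True
  with even show ?thesis
    by auto
next
  case False
  \<comment> \<open>Write s as a proper convex combination of t and -t.\<close>
  define l where "l = (t - s) / (2 * t)"
  have "t \<noteq> 0"
    using False \<open>\<bar>s\<bar> \<le> \<bar>t\<bar>\<close> by auto
  then have "0 < l" "l < 1" "(1 - l) * t + l * (- t) = s"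
    using False \<open>\<bar>s\<bar> \<le> \<bar>t\<bar>\<close> by (auto simp: l_def field_simps abs_if split: if_splits)
  moreover have "\<phi> t powr (1 - l) * \<phi> t powr l = \<phi> t"
    using log_concave_fun_nonneg[OF assms(1)] by (simp add: powr_add[symmetric])
  ultimately show ?thesis
    using log_concave_funD[OF assms(1), of l t "- t"] even by simp
qed

lemma convex_log_concave_support:
  assumes "log_concave_fun f"
  shows "convex {x. 0 < f x}"
  unfolding convex_alt
proof safe
  fix x y and t :: real assume x: "0 < f x" and y: "0 < f y" and t: "0 \<le> t" "t \<le> 1"
  consider "t = 0" | "t = 1" | "0 < t" "t < 1"
    using t by linarith
  then show "0 < f ((1 - t) *\<^sub>R x + t *\<^sub>R y)"
  proof cases
    case 3
    then have "0 < f x powr (1 - t) * f y powr t"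
      using x y by simp
    also have "\<dots> \<le> f ((1 - t) *\<^sub>R x + t *\<^sub>R y)"
      using log_concave_funD[OF assms 3] .
    finally show ?thesis .
  qed (use x y in auto)
qed

lemma continuous_on_log_concave_interior:
  fixes f :: "'a::euclidean_space \<Rightarrow> real"
  assumes "log_concave_fun f"
  shows "continuous_on (interior {x. 0 < f x}) f"
proof -
  let ?U = "interior {x. 0 < f x}"
  have "convex_on ?U (\<lambda>x. - ln (f x))"
  proof (rule convex_onI)
    show "convex ?U"
      using convex_log_concave_support[OF assms] by (rule convex_interior)
  next
    fix t :: real and x y assume "0 < t" "t < 1" "x \<in> ?U" "y \<in> ?U"
    then have pos: "0 < f x" "0 < f y"
      using interior_subset by blast+
    then have "0 < f ((1 - t) *\<^sub>R x + t *\<^sub>R y)"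
      using convexD_alt[OF convex_log_concave_support[OF assms], of x y t] \<open>0 < t\<close> \<open>t < 1\<close>
      by simp
    have "(1 - t) * ln (f x) + t * ln (f y) = ln (f x powr (1 - t) * f y powr t)"
      using pos by (simp add: ln_mult ln_powr)
    also have "\<dots> \<le> ln (f ((1 - t) *\<^sub>R x + t *\<^sub>R y))"
      using log_concave_funD[OF assms \<open>0 < t\<close> \<open>t < 1\<close>, of x y] pos \<open>0 < f ((1 - t) *\<^sub>R x + t *\<^sub>R y)\<close>
      by (subst ln_le_cancel_iff) auto
    finally show "- ln (f ((1 - t) *\<^sub>R x + t *\<^sub>R y)) \<le> (1 - t) * - ln (f x) + t * - ln (f y)"
      by simp
  qed
  then have "continuous_on ?U (\<lambda>x. exp (- (- ln (f x))))"
    by (intro continuous_intros convex_on_continuous) auto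
  moreover have "exp (- (- ln (f x))) = f x" if "x \<in> ?U" for x
    using that interior_subset by fastforce
  ultimately show ?thesis
    using continuous_on_cong by force
qed

text \<open>A log-concave density need only be Lebesgue measurable. Cutting it down to the interior of
  its (convex) support gives a Borel function that still is log-concave and differs from it only on
  the null boundary of the support.\<close>

definition restrict_to_interior :: "('a::euclidean_space \<Rightarrow> real) \<Rightarrow> 'a \<Rightarrow> real" where
  "restrict_to_interior f x = indicator (interior {x. 0 < f x}) x * f x"

lemma borel_measurable_restrict_to_interior:
  assumes "log_concave_fun f"
  shows "restrict_to_interior f \<in> borel_measurable borel"
  using borel_measurable_continuous_on_indicator[OF _ continuous_on_log_concave_interior[OF assms]]
  by (simp add: restrict_to_interior_def[abs_def])

lemma restrict_to_interior_nonneg: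
  assumes "log_concave_fun f"
  shows "0 \<le> restrict_to_interior f x"
  using log_concave_fun_nonneg[OF assms] by (simp add: restrict_to_interior_def)

lemma log_concave_restrict_to_interior:
  assumes "log_concave_fun f"
  shows "log_concave_fun (restrict_to_interior f)"
  unfolding log_concave_fun_def
proof (intro conjI allI impI)
  show "0 \<le> restrict_to_interior f x" for x
    by (rule restrict_to_interior_nonneg[OF assms])
next
  fix x y and t :: real assume t: "0 < t \<and> t < 1"
  let ?U = "interior {x. 0 < f x}"
  show "restrict_to_interior f x powr (1 - t) * restrict_to_interior f y powr t
      \<le> restrict_to_interior f ((1 - t) *\<^sub>R x + t *\<^sub>R y)"
  proof (cases "x \<in> ?U \<and> y \<in> ?U")
    case True
    moreover have "convex ?U"
      using convex_log_concave_support[OF assms] by (rule convex_interior)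
    ultimately have "(1 - t) *\<^sub>R x + t *\<^sub>R y \<in> ?U"
      using t by (intro convexD_alt) auto
    with True show ?thesis
      using log_concave_funD[OF assms, of t x y] t by (simp add: restrict_to_interior_def)
  next
    case False
    then have "restrict_to_interior f x = 0 \<or> restrict_to_interior f y = 0"
      by (auto simp: restrict_to_interior_def)
    then show ?thesis
      using restrict_to_interior_nonneg[OF assms] by auto
  qed
qed

lemma AE_restrict_to_interior_eq:
  fixes f :: "'a::euclidean_space \<Rightarrow> real"
  assumes "log_concave_fun f"
  shows "AE x in lebesgue. restrict_to_interior f x = f x"
proof (rule AE_I')
  show "frontier {x. 0 < f x} \<in> null_sets lebesgue"
    using negligible_convex_frontier[OF convex_log_concave_support[OF assms]]
    by (simp add: negligible_iff_null_sets)
  show "{x \<in> space lebesgue. restrict_to_interior f x \<noteq> f x} \<subseteq> frontier {x. 0 < f x}"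
  proof
    fix x assume "x \<in> {x \<in> space lebesgue. restrict_to_interior f x \<noteq> f x}"
    then have "x \<notin> interior {x. 0 < f x}" "f x \<noteq> 0"
      by (auto simp: restrict_to_interior_def)
    moreover have "x \<in> closure {x. 0 < f x}"
      using \<open>f x \<noteq> 0\<close> log_concave_fun_nonneg[OF assms, of x] closure_subset by force
    ultimately show "x \<in> frontier {x. 0 < f x}"
      by (simp add: frontier_def)
  qed
qed

lemma emeasure_density_restrict_to_interior:
  fixes f :: "'a::euclidean_space \<Rightarrow> real"
  assumes "f \<in> borel_measurable lebesgue" "log_concave_fun f" and [measurable]: "B \<in> sets borel"
  shows "emeasure (density lebesgue (\<lambda>x. ennreal (f x))) B
    = (\<integral>\<^sup>+x\<in>B. ennreal (restrict_to_interior f x) \<partial>lborel)"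
proof -
  note [measurable] = borel_measurable_restrict_to_interior[OF assms(2)]
  have "emeasure (density lebesgue (\<lambda>x. ennreal (f x))) B = (\<integral>\<^sup>+x\<in>B. ennreal (f x) \<partial>lebesgue)"
    using assms(1) by (simp add: emeasure_density)
  also have "\<dots> = (\<integral>\<^sup>+x\<in>B. ennreal (restrict_to_interior f x) \<partial>lebesgue)"
    using AE_restrict_to_interior_eq[OF assms(2)] by (intro nn_integral_cong_AE) auto
  also have "\<dots> = (\<integral>\<^sup>+x\<in>B. ennreal (restrict_to_interior f x) \<partial>lborel)"
    by (intro nn_integral_completion) measurable
  finally show ?thesis .
qed

lemma restrict_to_interior_invariant:
  assumes f_T: "\<And>x. f (T x) = f x" and dist_T: "\<And>x y. dist (T x) (T y) = dist x y"
    and involution: "\<And>x. T (T x) = x"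
  shows "restrict_to_interior f (T x) = restrict_to_interior f x"
proof -
  let ?S = "{x. 0 < f x}"
  have "T x \<in> interior ?S" if "x \<in> interior ?S" for x
  proof -
    obtain r where "0 < r" "ball x r \<subseteq> ?S"
      using \<open>x \<in> interior ?S\<close> by (auto simp: mem_interior)
    moreover have "T z \<in> ball x r" if "z \<in> ball (T x) r" for z
      using that dist_T[of "T x" z] by (simp add: involution)
    ultimately have "ball (T x) r \<subseteq> ?S"
      using f_T involution by (metis (mono_tags, lifting) mem_Collect_eq subset_iff)
    with \<open>0 < r\<close> show ?thesis
      by (auto simp: mem_interior)
  qed
  then have "T x \<in> interior ?S \<longleftrightarrow> x \<in> interior ?S"
    using involution by metis
  then show ?thesis
    by (simp add: restrict_to_interior_def f_T indicator_def)
qed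

lemma fiber_compact_convex_eq_interval:
  fixes K :: "'a::real_inner set"
  assumes "compact K" "convex K" "u \<noteq> 0"
  obtains a b where "fiber K u y = {a..b}"
proof -
  have fiber_eq: "fiber K u y = (\<lambda>t. y + t *\<^sub>R u) -` K"
    unfolding fiber_def by blast
  obtain B where B: "\<And>x. x \<in> K \<Longrightarrow> norm x \<le> B"
    using compact_imp_bounded[OF \<open>compact K\<close>] unfolding bounded_iff by blast
  have "closed (fiber K u y)"
    unfolding fiber_eq using \<open>compact K\<close>
    by (intro continuous_closed_vimage compact_imp_closed continuous_intros)
  have "\<bar>t\<bar> \<le> (B + norm y) / norm u" if "t \<in> fiber K u y" for t
  proof -
    have "\<bar>t\<bar> * norm u = norm (y + t *\<^sub>R u - y)"
      by simp
    also have "\<dots> \<le> B + norm y"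
      using B[of "y + t *\<^sub>R u"] that norm_triangle_ineq4[of "y + t *\<^sub>R u" y]
      by (simp add: fiber_def)
    finally show ?thesis
      using \<open>u \<noteq> 0\<close> by (simp add: field_simps)
  qed
  then have "bounded (fiber K u y)"
    unfolding bounded_iff real_norm_def by blast
  moreover note \<open>closed (fiber K u y)\<close>
  moreover have "convex (fiber K u y)"
    unfolding convex_alt
  proof safe
    fix s t and v :: real assume "s \<in> fiber K u y" "t \<in> fiber K u y" "0 \<le> v" "v \<le> 1"
    then have "(1 - v) *\<^sub>R (y + s *\<^sub>R u) + v *\<^sub>R (y + t *\<^sub>R u) \<in> K"
      using \<open>convex K\<close> by (simp add: fiber_def convex_alt)
    then show "(1 - v) *\<^sub>R s + v *\<^sub>R t \<in> fiber K u y"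
      by (simp add: fiber_def algebra_simps)
  qed
  ultimately have "connected (fiber K u y) \<and> compact (fiber K u y)"
    by (simp add: convex_connected compact_eq_bounded_closed)
  with that show ?thesis
    unfolding connected_compact_interval_1 by blast
qed

lemma steiner_symmetralE:
  assumes "w \<in> steiner_symmetral u K"
  obtains y s r where "inner y u = 0" "y + s *\<^sub>R u \<in> K" "y + r *\<^sub>R u \<in> K"
    "w = y + ((s - r) / 2) *\<^sub>R u"
  using assms by (auto simp: steiner_symmetral_def fiber_def)

lemma fiber_steiner_symmetral:
  fixes u y :: "'a::real_inner" assumes "norm u = 1" "inner y u = 0"
  shows "fiber (steiner_symmetral u K) u y
    = {(s + r) / 2 | s r. s \<in> fiber K u y \<and> r \<in> uminus ` fiber K u y}"
proof -
  have uu: "inner u u = 1"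
    using \<open>norm u = 1\<close> by (simp add: norm_eq_1)
  have "y' = y \<and> c = t" if "y + t *\<^sub>R u = y' + c *\<^sub>R u" "inner y' u = 0" for y' c t
  proof -
    have "inner (y + t *\<^sub>R u) u = inner (y' + c *\<^sub>R u) u"
      using that(1) by simp
    then have "c = t"
      using that(2) \<open>inner y u = 0\<close> uu by (simp add: inner_add_left)
    with that(1) show ?thesis
      by simp
  qed
  then show ?thesis
    unfolding steiner_symmetral_def fiber_def using \<open>inner y u = 0\<close> by blast
qed

lemma steiner_symmetral_eq_image:
  fixes K :: "'a::real_inner set" assumes "norm u = 1"
  shows "steiner_symmetral u K = (\<lambda>(p, q). p - ((inner p u + inner q u) / 2) *\<^sub>R u) `
    {(p, q) \<in> K \<times> K. p - inner p u *\<^sub>R u = q - inner q u *\<^sub>R u}"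
proof (intro set_eqI iffI)
  have uu: "inner u u = 1"
    using \<open>norm u = 1\<close> by (simp add: norm_eq_1)
  fix w
  assume "w \<in> steiner_symmetral u K"
  then obtain y s r where y: "inner y u = 0" and s: "y + s *\<^sub>R u \<in> K" and r: "y + r *\<^sub>R u \<in> K"
    and w: "w = y + ((s - r) / 2) *\<^sub>R u"
    by (rule steiner_symmetralE)
  show "w \<in> (\<lambda>(p, q). p - ((inner p u + inner q u) / 2) *\<^sub>R u) `
    {(p, q) \<in> K \<times> K. p - inner p u *\<^sub>R u = q - inner q u *\<^sub>R u}"
  proof (rule rev_image_eqI[of "(y + s *\<^sub>R u, y + r *\<^sub>R u)"])
    show "w = (case (y + s *\<^sub>R u, y + r *\<^sub>R u) of
        (p, q) \<Rightarrow> p - ((inner p u + inner q u) / 2) *\<^sub>R u)"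
      using y uu by (simp add: w inner_add_left flip: scaleR_diff_left, simp add: field_simps)
  qed (use s r y uu in \<open>auto simp: inner_add_left\<close>)
next
  have uu: "inner u u = 1"
    using \<open>norm u = 1\<close> by (simp add: norm_eq_1)
  fix w
  assume "w \<in> (\<lambda>(p, q). p - ((inner p u + inner q u) / 2) *\<^sub>R u) `
    {(p, q) \<in> K \<times> K. p - inner p u *\<^sub>R u = q - inner q u *\<^sub>R u}"
  then obtain p q where "p \<in> K" "q \<in> K" and same: "p - inner p u *\<^sub>R u = q - inner q u *\<^sub>R u"
    and w: "w = p - ((inner p u + inner q u) / 2) *\<^sub>R u"
    by auto
  define y where "y = p - inner p u *\<^sub>R u"
  have "inner y u = 0"
    using uu by (simp add: y_def inner_diff_left)
  moreover have "y + inner p u *\<^sub>R u \<in> K"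
    using \<open>p \<in> K\<close> by (simp add: y_def)
  moreover have "y + inner q u *\<^sub>R u \<in> K"
    using \<open>q \<in> K\<close> unfolding y_def same by simp
  moreover have "w = y + ((inner p u + - inner q u) / 2) *\<^sub>R u"
    by (simp add: w y_def algebra_simps flip: scaleR_add_left, simp add: field_simps)
  ultimately show "w \<in> steiner_symmetral u K"
    unfolding steiner_symmetral_def fiber_def by blast
qed

lemma compact_steiner_symmetral:
  fixes K :: "'a::real_inner set" assumes "compact K" "norm u = 1"
  shows "compact (steiner_symmetral u K)"
proof -
  have "closed {(p, q :: 'a). p - inner p u *\<^sub>R u = q - inner q u *\<^sub>R u}"
    unfolding case_prod_unfold by (intro closed_Collect_eq continuous_intros)
  then have "compact ((K \<times> K) \<inter> {(p, q). p - inner p u *\<^sub>R u = q - inner q u *\<^sub>R u})"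
    using \<open>compact K\<close> by (intro compact_Int_closed compact_Times)
  also have "(K \<times> K) \<inter> {(p, q). p - inner p u *\<^sub>R u = q - inner q u *\<^sub>R u}
      = {(p, q) \<in> K \<times> K. p - inner p u *\<^sub>R u = q - inner q u *\<^sub>R u}"
    by auto
  finally show ?thesis
    unfolding steiner_symmetral_eq_image[OF \<open>norm u = 1\<close>]
    by (intro compact_continuous_image) (auto simp: case_prod_unfold intro!: continuous_intros)
qed

lemma closed_polar: "closed (polar K)"
proof -
  have "polar K = (\<Inter>x\<in>K. {y. inner x y \<le> 1})"
    by (auto simp: polar_def)
  then show ?thesis
    by (auto intro!: closed_INT closed_Collect_le continuous_intros)
qed

lemma polar_steiner_symmetral_midpoint:
  fixes K :: "'a::real_inner set"
  assumes "norm u = 1" and "symmetric_set K"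
    and p: "p \<in> polar K" and q: "(2 * inner q u) *\<^sub>R u - q \<in> polar K"
    and same_height: "inner p u = inner q u"
  shows "(1 / 2) *\<^sub>R (p + q) \<in> polar (steiner_symmetral u K)"
  unfolding polar_def
proof safe
  have uu: "inner u u = 1"
    using \<open>norm u = 1\<close> by (simp add: norm_eq_1)
  fix w assume "w \<in> steiner_symmetral u K"
  then obtain y s r where y: "inner y u = 0" and s: "y + s *\<^sub>R u \<in> K" and r: "y + r *\<^sub>R u \<in> K"
    and w: "w = y + ((s - r) / 2) *\<^sub>R u"
    by (rule steiner_symmetralE)
  have "inner (y + s *\<^sub>R u) p \<le> 1"
    using p s by (auto simp: polar_def)
  then have test_p: "inner y p + s * inner p u \<le> 1"
    by (simp add: inner_add_left inner_commute[of u p])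
  have "- (y + r *\<^sub>R u) \<in> K"
    using imageI[OF r, of uminus] \<open>symmetric_set K\<close> by (simp add: symmetric_set_def)
  then have "inner (- (y + r *\<^sub>R u)) ((2 * inner q u) *\<^sub>R u - q) \<le> 1"
    using q by (auto simp: polar_def)
  also have "inner (- (y + r *\<^sub>R u)) ((2 * inner q u) *\<^sub>R u - q) = inner y q - r * inner q u"
    using y uu by (simp add: inner_add_left inner_diff_right inner_commute[of u q] inner_commute[of y u]
        algebra_simps)
  finally have test_q: "inner y q - r * inner q u \<le> 1" .
  have "inner w ((1 / 2) *\<^sub>R (p + q)) = ((inner y p + s * inner p u) + (inner y q - r * inner q u)) / 2"
    using y same_height
    by (simp add: w inner_add_left inner_add_right inner_commute[of u p] inner_commute[of u q] field_simps)
  also have "\<dots> \<le> 1"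
    using add_mono[OF test_p test_q] by simp
  finally show "inner w ((1 / 2) *\<^sub>R (p + q)) \<le> 1" .
qed

section \<open>Steiner symmetrization increases the measure of a body and of its polar\<close>

lemma nn_integral_lborel_split_Basis:
  fixes F :: "'a::euclidean_space \<Rightarrow> ennreal"
  assumes [measurable]: "F \<in> borel_measurable borel" and "u \<in> Basis"
  shows "(\<integral>\<^sup>+z. F z \<partial>lborel)
      = (\<integral>\<^sup>+x. \<integral>\<^sup>+t. F ((\<Sum>b\<in>Basis - {u}. x b *\<^sub>R b) + t *\<^sub>R u) \<partial>lborel \<partial>(\<Pi>\<^sub>M b\<in>Basis - {u}. lborel))"
    and "(\<integral>\<^sup>+z. F z \<partial>lborel)
      = (\<integral>\<^sup>+t. \<integral>\<^sup>+x. F ((\<Sum>b\<in>Basis - {u}. x b *\<^sub>R b) + t *\<^sub>R u) \<partial>(\<Pi>\<^sub>M b\<in>Basis - {u}. lborel) \<partial>lborel)"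
proof -
  interpret product_sigma_finite "(\<lambda>_. lborel) :: 'a \<Rightarrow> real measure"
    by standard
  have Basis: "Basis = insert u (Basis - {u})"
    using \<open>u \<in> Basis\<close> by auto
  have sum_update: "(\<Sum>b\<in>Basis. (if b = u then t else x b) *\<^sub>R b) = (\<Sum>b\<in>Basis - {u}. x b *\<^sub>R b) + t *\<^sub>R u"
    for x :: "'a \<Rightarrow> real" and t
    using \<open>u \<in> Basis\<close> by (subst Basis) (simp add: sum.insert_remove add.commute)
  have "(\<Pi>\<^sub>M b\<in>Basis. lborel) = (\<Pi>\<^sub>M b\<in>insert u (Basis - {u}). (lborel :: real measure))"
    using Basis by (rule arg_cong)
  then have eq: "(\<integral>\<^sup>+z. F z \<partial>lborel)
      = (\<integral>\<^sup>+x. F (\<Sum>b\<in>Basis. x b *\<^sub>R b) \<partial>(\<Pi>\<^sub>M b\<in>insert u (Basis - {u}). lborel))"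
    by (subst lborel_eq) (simp add: nn_integral_distr)
  show "(\<integral>\<^sup>+z. F z \<partial>lborel)
      = (\<integral>\<^sup>+x. \<integral>\<^sup>+t. F ((\<Sum>b\<in>Basis - {u}. x b *\<^sub>R b) + t *\<^sub>R u) \<partial>lborel \<partial>(\<Pi>\<^sub>M b\<in>Basis - {u}. lborel))"
    unfolding eq by (subst product_nn_integral_insert) (simp_all add: sum_update)
  show "(\<integral>\<^sup>+z. F z \<partial>lborel)
      = (\<integral>\<^sup>+t. \<integral>\<^sup>+x. F ((\<Sum>b\<in>Basis - {u}. x b *\<^sub>R b) + t *\<^sub>R u) \<partial>(\<Pi>\<^sub>M b\<in>Basis - {u}. lborel) \<partial>lborel)"
    unfolding eq by (subst product_nn_integral_insert_rev) (simp_all add: sum_update)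
qed

lemma inner_sum_Basis_remove:
  fixes u :: "'a::euclidean_space" assumes "u \<in> Basis"
  shows "inner (\<Sum>b\<in>Basis - {u}. x b *\<^sub>R b) u = 0"
  using assms by (simp add: inner_sum_left inner_not_same_Basis)

lemma nn_integral_fiber_le_fiber_steiner_symmetral:
  fixes \<phi> :: "real \<Rightarrow> real" and K :: "'a::real_inner set"
  assumes "\<phi> \<in> borel_measurable borel" "log_concave_fun \<phi>" "\<And>t. \<phi> (- t) = \<phi> t"
    and "compact K" "convex K" "norm u = 1" "inner y u = 0"
  shows "(\<integral>\<^sup>+t\<in>fiber K u y. ennreal (\<phi> t) \<partial>lborel)
    \<le> (\<integral>\<^sup>+t\<in>fiber (steiner_symmetral u K) u y. ennreal (\<phi> t) \<partial>lborel)"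
proof -
  have "u \<noteq> 0"
    using \<open>norm u = 1\<close> by auto
  then obtain a b where ab: "fiber K u y = {a..b}"
    using fiber_compact_convex_eq_interval[OF \<open>compact K\<close> \<open>convex K\<close>] by blast
  show ?thesis
  proof (cases "a \<le> b")
    case True
    have "{-((b - a) / 2)..(b - a) / 2} \<subseteq> fiber (steiner_symmetral u K) u y"
    proof
      fix t assume "t \<in> {-((b - a) / 2)..(b - a) / 2}"
      \<comment> \<open>t is the midpoint of m + t and -(m - t), where m is the centre of the fiber.\<close>
      then have "(a + b) / 2 + t \<in> fiber K u y" "- ((a + b) / 2 - t) \<in> uminus ` fiber K u y"
        unfolding ab by (auto simp: field_simps)
      moreover have "t = (((a + b) / 2 + t) + - ((a + b) / 2 - t)) / 2"
        by simp
      ultimately show "t \<in> fiber (steiner_symmetral u K) u y"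
        unfolding fiber_steiner_symmetral[OF \<open>norm u = 1\<close> \<open>inner y u = 0\<close>]
        by (intro CollectI exI[of _ "(a + b) / 2 + t"] exI[of _ "- ((a + b) / 2 - t)"]) simp
    qed
    then have "(\<integral>\<^sup>+t\<in>{-((b - a) / 2)..(b - a) / 2}. ennreal (\<phi> t) \<partial>lborel)
        \<le> (\<integral>\<^sup>+t\<in>fiber (steiner_symmetral u K) u y. ennreal (\<phi> t) \<partial>lborel)"
      by (intro nn_integral_mono) (auto split: split_indicator)
    moreover have "(\<integral>\<^sup>+t\<in>{a..b}. ennreal (\<phi> t) \<partial>lborel)
        \<le> (\<integral>\<^sup>+t\<in>{-((b - a) / 2)..(b - a) / 2}. ennreal (\<phi> t) \<partial>lborel)"
      using assms True log_concave_fun_even_unimodal[OF assms(2,3)]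
      by (intro nn_integral_interval_le_centered) (auto intro: ennreal_leI)
    ultimately show ?thesis
      unfolding ab by (rule order_trans[rotated])
  qed (simp add: ab)
qed

lemma nn_integral_le_steiner_symmetral:
  fixes g :: "'a::euclidean_space \<Rightarrow> real"
  assumes [measurable]: "g \<in> borel_measurable borel" and "log_concave_fun g" "u \<in> Basis"
    and reflection: "\<And>x. g (x - (2 * inner x u) *\<^sub>R u) = g x"
    and "compact K" "convex K"
  shows "(\<integral>\<^sup>+x\<in>K. ennreal (g x) \<partial>lborel) \<le> (\<integral>\<^sup>+x\<in>steiner_symmetral u K. ennreal (g x) \<partial>lborel)"
proof -
  have u: "norm u = 1" "inner u u = 1"
    using \<open>u \<in> Basis\<close> by auto
  have [measurable]: "K \<in> sets borel" "steiner_symmetral u K \<in> sets borel"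
    using \<open>compact K\<close> compact_steiner_symmetral[OF \<open>compact K\<close> u(1)] by (auto intro: borel_compact)
  have fiberwise: "(\<integral>\<^sup>+t. ennreal (g (y + t *\<^sub>R u)) * indicator K (y + t *\<^sub>R u) \<partial>lborel)
      \<le> (\<integral>\<^sup>+t. ennreal (g (y + t *\<^sub>R u)) * indicator (steiner_symmetral u K) (y + t *\<^sub>R u) \<partial>lborel)"
    if "inner y u = 0" for y
  proof -
    have "(y + t *\<^sub>R u) - (2 * inner (y + t *\<^sub>R u) u) *\<^sub>R u = y + (- t) *\<^sub>R u" for t
      using that u
      by (simp add: inner_add_left scaleR_diff_left[symmetric] diff_add_eq[symmetric] add_diff_eq[symmetric])
    then have "g (y + (- t) *\<^sub>R u) = g (y + t *\<^sub>R u)" for t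
      using reflection[of "y + t *\<^sub>R u"] by metis
    then have "(\<integral>\<^sup>+t\<in>fiber K u y. ennreal (g (y + t *\<^sub>R u)) \<partial>lborel)
        \<le> (\<integral>\<^sup>+t\<in>fiber (steiner_symmetral u K) u y. ennreal (g (y + t *\<^sub>R u)) \<partial>lborel)"
      using that assms u
      by (intro nn_integral_fiber_le_fiber_steiner_symmetral log_concave_fun_compose_affine) auto
    then show ?thesis
      by (simp add: fiber_def indicator_def)
  qed
  have split: "(\<integral>\<^sup>+x\<in>A. ennreal (g x) \<partial>lborel) = (\<integral>\<^sup>+x. \<integral>\<^sup>+t.
      ennreal (g ((\<Sum>b\<in>Basis - {u}. x b *\<^sub>R b) + t *\<^sub>R u)) * indicator A ((\<Sum>b\<in>Basis - {u}. x b *\<^sub>R b) + t *\<^sub>R u)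
      \<partial>lborel \<partial>(\<Pi>\<^sub>M b\<in>Basis - {u}. lborel))"
    if [measurable]: "A \<in> sets borel" for A
    by (rule nn_integral_lborel_split_Basis(1)[OF _ \<open>u \<in> Basis\<close>]) measurable
  show ?thesis
    unfolding split[OF \<open>K \<in> sets borel\<close>] split[OF \<open>steiner_symmetral u K \<in> sets borel\<close>]
    using \<open>u \<in> Basis\<close> by (intro nn_integral_mono fiberwise inner_sum_Basis_remove)
qed

lemma nn_integral_polar_slice_le:
  fixes g :: "'a::euclidean_space \<Rightarrow> real" and \<sigma> :: real
  assumes [measurable]: "g \<in> borel_measurable borel" and "log_concave_fun g" "u \<in> Basis"
    and reflection: "\<And>x. g ((2 * inner x u) *\<^sub>R u - x) = g x" and "symmetric_set K"
  defines "Y \<equiv> \<lambda>x. (\<Sum>b\<in>Basis - {u}. x b *\<^sub>R b) + \<sigma> *\<^sub>R u"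
  shows "(\<integral>\<^sup>+x. ennreal (g (Y x)) * indicator (polar K) (Y x) \<partial>(\<Pi>\<^sub>M b\<in>Basis - {u}. lborel))
    \<le> (\<integral>\<^sup>+x. ennreal (g (Y x)) * indicator (polar (steiner_symmetral u K)) (Y x) \<partial>(\<Pi>\<^sub>M b\<in>Basis - {u}. lborel))"
proof -
  let ?M = "\<Pi>\<^sub>M b\<in>Basis - {u}. lborel"
  define F where "F x = ennreal (g (Y x)) * indicator (polar K) (Y x)" for x
  define H where "H x = ennreal (g (Y x)) * indicator (polar (steiner_symmetral u K)) (Y x)" for x
  have u: "norm u = 1" "inner u u = 1"
    using \<open>u \<in> Basis\<close> by auto
  have height: "inner (Y x) u = \<sigma>" for x
    using \<open>u \<in> Basis\<close> u by (simp add: Y_def inner_add_left inner_sum_Basis_remove)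
  have [measurable]: "polar K \<in> sets borel" "polar (steiner_symmetral u K) \<in> sets borel"
    by (auto intro: borel_closed closed_polar)
  have [measurable]: "Y \<in> ?M \<rightarrow>\<^sub>M borel"
    unfolding Y_def by measurable
  have [measurable]: "F \<in> borel_measurable ?M" "H \<in> borel_measurable ?M"
    unfolding F_def H_def by measurable
  have Y_reflect: "Y (\<lambda>b\<in>Basis - {u}. - y b) = (2 * inner (Y y) u) *\<^sub>R u - Y y" for y
    using height[of y] by (simp add: Y_def sum_negf algebra_simps, simp flip: scaleR_add_left)
  have Y_mid: "Y (\<lambda>b\<in>Basis - {u}. (x b + y b) / 2) = (1 / 2) *\<^sub>R (Y x + Y y)" for x y
    by (simp add: Y_def scaleR_add_right scaleR_add_left sum.distrib add_divide_distrib
        scaleR_sum_right algebra_simps, simp flip: scaleR_add_left)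
  have "F x * F (\<lambda>b\<in>Basis - {u}. - y b) \<le> H (\<lambda>b\<in>Basis - {u}. (x b + y b) / 2) ^ 2" for x y
  proof (cases "Y x \<in> polar K \<and> (2 * inner (Y y) u) *\<^sub>R u - Y y \<in> polar K")
    case True
    then have "(1 / 2) *\<^sub>R (Y x + Y y) \<in> polar (steiner_symmetral u K)"
      using height by (intro polar_steiner_symmetral_midpoint u(1) \<open>symmetric_set K\<close>) auto
    moreover have "g (Y x) * g (Y y) \<le> g ((1 / 2) *\<^sub>R (Y x + Y y)) ^ 2"
      by (rule log_concave_fun_midpoint[OF \<open>log_concave_fun g\<close>])
    ultimately show ?thesis
      using True log_concave_fun_nonneg[OF \<open>log_concave_fun g\<close>]
      by (simp add: F_def H_def Y_reflect Y_mid reflection ennreal_mult[symmetric] ennreal_power ennreal_leI)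
  qed (auto simp: F_def Y_reflect)
  then have "(\<integral>\<^sup>+x. F x \<partial>?M) * (\<integral>\<^sup>+y. F (\<lambda>b\<in>Basis - {u}. - y b) \<partial>?M) \<le> (\<integral>\<^sup>+x. H x \<partial>?M) ^ 2"
    by (intro prekopa_leindler_midpoint_PiM) auto
  then have "(\<integral>\<^sup>+x. F x \<partial>?M) ^ 2 \<le> (\<integral>\<^sup>+x. H x \<partial>?M) ^ 2"
    by (simp add: nn_integral_PiM_lborel_reflect power2_eq_square)
  then show ?thesis
    unfolding F_def H_def by (rule ennreal_le_of_power2_le)
qed

lemma nn_integral_polar_le_polar_steiner_symmetral:
  fixes g :: "'a::euclidean_space \<Rightarrow> real"
  assumes [measurable]: "g \<in> borel_measurable borel" and "log_concave_fun g" "u \<in> Basis"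
    and "\<And>x. g ((2 * inner x u) *\<^sub>R u - x) = g x" and "symmetric_set K"
  shows "(\<integral>\<^sup>+x\<in>polar K. ennreal (g x) \<partial>lborel)
    \<le> (\<integral>\<^sup>+x\<in>polar (steiner_symmetral u K). ennreal (g x) \<partial>lborel)"
proof -
  have split: "(\<integral>\<^sup>+x\<in>A. ennreal (g x) \<partial>lborel) = (\<integral>\<^sup>+\<sigma>. \<integral>\<^sup>+x.
      ennreal (g ((\<Sum>b\<in>Basis - {u}. x b *\<^sub>R b) + \<sigma> *\<^sub>R u)) * indicator A ((\<Sum>b\<in>Basis - {u}. x b *\<^sub>R b) + \<sigma> *\<^sub>R u)
      \<partial>(\<Pi>\<^sub>M b\<in>Basis - {u}. lborel) \<partial>lborel)"
    if [measurable]: "A \<in> sets borel" for A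
    by (rule nn_integral_lborel_split_Basis(2)[OF _ \<open>u \<in> Basis\<close>]) measurable
  show ?thesis
    unfolding split[OF borel_closed[OF closed_polar]] using assms
    by (intro nn_integral_mono nn_integral_polar_slice_le)
qed

lemma dist_sign_flip:
  assumes "\<forall>j. \<epsilon> j \<in> {-1, 1}"
  shows "dist (\<chi> j. \<epsilon> j * x $ j) (\<chi> j. \<epsilon> j * y $ j) = dist x (y :: real^'n)"
proof -
  have "\<bar>\<epsilon> j\<bar> = 1" for j
    using assms[rule_format, of j] by auto
  then show ?thesis
    by (simp add: dist_vec_def dist_real_def abs_mult flip: right_diff_distrib)
qed

lemma sign_flip_involution:
  assumes "\<forall>j. \<epsilon> j \<in> {-1, 1}"
  shows "(\<chi> j. \<epsilon> j * (\<chi> j. \<epsilon> j * x $ j) $ j) = (x :: real^'n)"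
proof -
  have "\<epsilon> j * \<epsilon> j = 1" for j
    using assms[rule_format, of j] by auto
  then show ?thesis
    by (simp add: vec_eq_iff flip: mult.assoc)
qed

lemma axis_reflections_as_sign_flips:
  fixes x :: "real^'n"
  shows "x - (2 * inner x (axis i 1)) *\<^sub>R axis i 1 = (\<chi> j. (if j = i then -1 else 1) * x $ j)"
    and "(2 * inner x (axis i 1)) *\<^sub>R axis i 1 - x = (\<chi> j. (if j = i then 1 else -1) * x $ j)"
  by (simp_all add: inner_axis, simp_all add: vec_eq_iff axis_def)

theorem claim1:
  fixes \<mu> :: "(real^'n) measure" and K :: "(real^'n) set" and i :: 'n
  assumes "log_concave_measure \<mu>" and "unconditional_measure \<mu>"
    and "convex_body K" and "symmetric_set K"
  shows "emeasure \<mu> K * emeasure \<mu> (polar K)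
         \<le> emeasure \<mu> (steiner_symmetral (axis i 1) K)
           * emeasure \<mu> (polar (steiner_symmetral (axis i 1) K))"
proof -
  \<comment> \<open>unconditional_measure already provides a log-concave density.\<close>
  obtain f where f: "f \<in> borel_measurable lebesgue" "log_concave_fun f"
    and \<mu>: "\<mu> = density lebesgue (\<lambda>x. ennreal (f x))"
    and flip: "\<And>x (\<epsilon>::'n \<Rightarrow> real). \<forall>j. \<epsilon> j \<in> {-1, 1} \<Longrightarrow> f (\<chi> j. \<epsilon> j * x $ j) = f x"
    using \<open>unconditional_measure \<mu>\<close> unfolding unconditional_measure_def by blast
  define u :: "real^'n" where "u = axis i 1"
  define g where "g = restrict_to_interior f"
  have g: "g \<in> borel_measurable borel" "log_concave_fun g"
    unfolding g_def using f(2) by (auto intro: borel_measurable_restrict_to_interior log_concave_restrict_to_interior)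
  have g_flip: "g (\<chi> j. \<epsilon> j * x $ j) = g x" if "\<forall>j. \<epsilon> j \<in> {-1, 1}" for \<epsilon> x
    unfolding g_def using that flip
    by (intro restrict_to_interior_invariant dist_sign_flip sign_flip_involution) auto
  have reflections: "g (x - (2 * inner x u) *\<^sub>R u) = g x" "g ((2 * inner x u) *\<^sub>R u - x) = g x" for x
    unfolding u_def axis_reflections_as_sign_flips by (rule g_flip, simp)+
  have "u \<in> Basis"
    by (simp add: u_def)
  have K: "compact K" "convex K" "compact (steiner_symmetral u K)"
    using \<open>convex_body K\<close> compact_steiner_symmetral[of K u] \<open>u \<in> Basis\<close> by (auto simp: convex_body_def)
  have "emeasure \<mu> K \<le> emeasure \<mu> (steiner_symmetral u K)"
    unfolding \<mu> using K f g reflections \<open>u \<in> Basis\<close>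
    by (simp add: emeasure_density_restrict_to_interior borel_compact nn_integral_le_steiner_symmetral
        flip: g_def)
  moreover have "emeasure \<mu> (polar K) \<le> emeasure \<mu> (polar (steiner_symmetral u K))"
    unfolding \<mu> using f g reflections \<open>u \<in> Basis\<close> \<open>symmetric_set K\<close>
    by (simp add: emeasure_density_restrict_to_interior borel_closed closed_polar
        nn_integral_polar_le_polar_steiner_symmetral flip: g_def)
  ultimately show ?thesis
    unfolding u_def by (intro mult_mono) auto
qed

end
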